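(* Let $c\ge1$ be an integer and $\mathcal{P}$ a $c$-indistinguishable finite bias distribution. Then for every $1\le\ell\le c$, $\mathcal{R}_{\ell,\mathcal{P}}=E_p\bigl[\sqrt{p(1-p)}\bigr]>0$.
   Context: A finite bias distribution is a probability distribution $\mathcal{P}$ supported on a finite subset of $(0,1)$ that is symmetric: it outputs $a$ and $1-a$ with the same probability. $E_p$ is expectation over $p\sim\mathcal{P}$. $\sigma(p)=\sqrt{(1-p)/p}$; for integers $\ell\ge1$, $0\le x\le\ell$, $f_{\ell,x}(p)=p^x(1-p)^{\ell-x}(x\sigma(p)-(\ell-x)\sigma(1-p))$, $R_{\ell,x}=\max\{0,E_p[f_{\ell,x}(p)]\}$, and $\mathcal{R}_{\ell,\mathcal{P}}=E_p[-f_{\ell,0}(p)]-\sum_{x=1}^{\ell-1}\binom{\ell}{x}R_{\ell,x}$. $\mathcal{P}$ is $c$-indistinguishable if $\sum_{x=1}^{\ell-1}\binom{\ell}{x}R_{\ell,x}=0$ for all $2\le\ell\le c$. *)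

theory Defs
  imports "HOL-Probability.Probability"
begin

definition finite_bias_dist :: "real pmf \<Rightarrow> bool" where
  "finite_bias_dist P \<longleftrightarrow> finite (set_pmf P) \<and> set_pmf P \<subseteq> {0<..<1}
     \<and> (\<forall>a. pmf P a = pmf P (1 - a))"

definition E :: "real pmf \<Rightarrow> (real \<Rightarrow> real) \<Rightarrow> real" where
  "E P f = measure_pmf.expectation P f"

definition sigma :: "real \<Rightarrow> real" where
  "sigma p = sqrt ((1 - p) / p)"

definition f_lx :: "nat \<Rightarrow> nat \<Rightarrow> real \<Rightarrow> real" where
  "f_lx l x p = p ^ x * (1 - p) ^ (l - x) * (real x * sigma p - real (l - x) * sigma (1 - p))"

definition R_lx :: "real pmf \<Rightarrow> nat \<Rightarrow> nat \<Rightarrow> real" where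
  "R_lx P l x = max 0 (E P (f_lx l x))"

definition R_cal :: "nat \<Rightarrow> real pmf \<Rightarrow> real" where
  "R_cal l P = E P (\<lambda>p. - f_lx l 0 p) - (\<Sum>x = 1..l - 1. real (l choose x) * R_lx P l x)"

definition indisting :: "nat \<Rightarrow> real pmf \<Rightarrow> bool" where
  "indisting c P \<longleftrightarrow> (\<forall>l. 2 \<le> l \<and> l \<le> c \<longrightarrow>
       (\<Sum>x = 1..l - 1. real (l choose x) * R_lx P l x) = 0)"

end

theory Submission
  imports Defs "HOL-Analysis.Weierstrass_Theorems"
begin

text \<open>For \<open>0 < p < 1\<close> one has \<open>f_lx l x p = p^x (1-p)^(l-x) (x - l p) / sqrt (p (1-p))\<close>,
so the mean \<open>n p\<close> of the binomial distribution (Bernstein polynomials) gives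
\<open>\<Sum>x\<le>n. (n choose x) f_lx (n+1) x p = - sqrt (p (1-p))\<close>. Indistinguishability makes
\<open>E P (f_lx l x) \<le> 0\<close> for \<open>0 < x < l\<close>, and the symmetry \<open>f_lx l (l-x) p = - f_lx l x (1-p)\<close>
of a symmetric \<open>P\<close> upgrades this to equality. Hence only the term \<open>x = 0\<close> of the binomial
sum survives in expectation, and \<open>R_cal l P = E P (- f_lx l 0) = E P (\<lambda>p. sqrt (p (1-p)))\<close>.\<close>

lemma sqrt_mult_sigma:
  assumes "0 < p" "p < 1"
  shows "sqrt (p * (1 - p)) * sigma p = 1 - p"
proof -
  have "p * (1 - p) * ((1 - p) / p) = (1 - p)\<^sup>2"
    using assms by (simp add: power2_eq_square)
  then show ?thesis
    using assms by (simp add: sigma_def real_sqrt_mult[symmetric])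
qed

lemma sigma_combination:
  fixes a b p :: real
  assumes "0 < p" "p < 1"
  shows "a * sigma p - b * sigma (1 - p) = (a * (1 - p) - b * p) / sqrt (p * (1 - p))"
proof -
  have s_nz: "sqrt (p * (1 - p)) \<noteq> 0"
    using assms by simp
  have sigma_p: "sigma p = (1 - p) / sqrt (p * (1 - p))"
    by (metis s_nz sqrt_mult_sigma[OF assms] nonzero_eq_divide_eq mult.commute)
  have sigma_q: "sigma (1 - p) = p / sqrt (p * (1 - p))"
  proof -
    have "sqrt (p * (1 - p)) * sigma (1 - p) = p"
      using sqrt_mult_sigma[of "1 - p"] assms by (simp add: mult.commute)
    then show ?thesis
      by (metis s_nz nonzero_eq_divide_eq mult.commute)
  qed
  show ?thesis
    unfolding sigma_p sigma_q times_divide_eq_right by (rule diff_divide_distrib[symmetric])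
qed

lemma f_lx_eq:
  assumes "0 < p" "p < 1" "x \<le> l"
  shows "f_lx l x p = p ^ x * (1 - p) ^ (l - x) * (real x - real l * p) / sqrt (p * (1 - p))"
proof -
  have "real x * (1 - p) - real (l - x) * p = real x - real l * p"
    using assms(3) by (simp add: of_nat_diff algebra_simps)
  then show ?thesis
    using assms by (simp add: f_lx_def sigma_combination)
qed

lemma binomial_sum_f_lx:
  fixes p :: real
  assumes "0 < p" "p < 1"
  shows "(\<Sum>x\<le>n. real (n choose x) * f_lx (Suc n) x p) = - sqrt (p * (1 - p))"
proof -
  define s where "s = sqrt (p * (1 - p))"
  have s_pos: "s > 0" using assms by (simp add: s_def)
  have "(\<Sum>x\<le>n. real (n choose x) * f_lx (Suc n) x p)
      = (\<Sum>x\<le>n. (1 - p) / s * (real x * Bernstein n x p - (n + 1) * p * Bernstein n x p))"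
    using assms by (intro sum.cong) (simp_all add: f_lx_eq Suc_diff_le Bernstein_def s_def field_simps)
  also have "\<dots> = (1 - p) / s * ((\<Sum>x\<le>n. real x * Bernstein n x p) - (n + 1) * p * (\<Sum>x\<le>n. Bernstein n x p))"
    by (simp only: sum_distrib_left sum_subtractf[symmetric])
  also have "\<dots> = - (p * (1 - p)) / s"
    by (simp add: algebra_simps)
  also have "\<dots> = - s"
    using s_pos assms by (simp add: s_def field_simps)
  finally show ?thesis by (simp add: s_def)
qed

lemma f_lx_reflect: "x \<le> l \<Longrightarrow> f_lx l (l - x) p = - f_lx l x (1 - p)"
  by (simp add: f_lx_def algebra_simps)

lemma E_eq_sum_set_pmf:
  assumes "finite (set_pmf P)"
  shows "E P g = (\<Sum>a\<in>set_pmf P. g a * pmf P a)"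
  unfolding E_def by (rule integral_measure_pmf_real) (use assms in auto)

lemma E_cong:
  assumes "finite (set_pmf P)" "\<And>a. a \<in> set_pmf P \<Longrightarrow> g a = h a"
  shows "E P g = E P h"
  using assms by (simp add: E_eq_sum_set_pmf)

lemma E_pos:
  assumes "finite (set_pmf P)" "\<And>a. a \<in> set_pmf P \<Longrightarrow> 0 < g a"
  shows "0 < E P g"
  unfolding E_eq_sum_set_pmf[OF assms(1)]
  by (rule sum_pos) (simp_all add: assms pmf_positive set_pmf_not_empty)

lemma E_uminus: "E P (\<lambda>p. - g p) = - E P g"
  by (simp add: E_def)

lemma E_sum_cmult:
  assumes "finite (set_pmf P)"
  shows "E P (\<lambda>p. \<Sum>x\<in>A. c x * h x p) = (\<Sum>x\<in>A. c x * E P (h x))"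
  unfolding E_def
  by (simp add: Bochner_Integration.integral_sum integrable_measure_pmf_finite[OF assms])

lemma E_reflect:
  assumes "finite_bias_dist P"
  shows "E P (\<lambda>p. g (1 - p)) = E P g"
proof -
  have "map_pmf (\<lambda>a. 1 - a) P = P"
  proof (rule pmf_eqI)
    fix a :: real
    have "pmf (map_pmf (\<lambda>a. 1 - a) P) a = pmf P (1 - a)"
      using pmf_map_inj'[of "\<lambda>a. 1 - a" P "1 - a"] by (simp add: inj_on_def)
    then show "pmf (map_pmf (\<lambda>a. 1 - a) P) a = pmf P a"
      using assms by (simp add: finite_bias_dist_def)
  qed
  then show ?thesis
    unfolding E_def by (metis integral_map_pmf)
qed

lemma E_f_lx_reflect:
  assumes "finite_bias_dist P" "x \<le> l"
  shows "E P (f_lx l (l - x)) = - E P (f_lx l x)"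
proof -
  have "f_lx l (l - x) = (\<lambda>p. - f_lx l x (1 - p))"
    using f_lx_reflect[OF assms(2)] by (simp add: fun_eq_iff)
  then show ?thesis
    by (simp add: E_uminus E_reflect[OF assms(1)])
qed

lemma E_f_lx_nonpos_if_sum_R_lx_eq_0:
  assumes "(\<Sum>y = 1..l - 1. real (l choose y) * R_lx P l y) = 0" "0 < x" "x < l"
  shows "E P (f_lx l x) \<le> 0"
proof -
  have "x \<in> {1..l - 1}"
    using assms(2,3) by auto
  then have "real (l choose x) * R_lx P l x = 0"
    using assms(1) sum_nonneg_eq_0_iff[of "{1..l - 1}" "\<lambda>y. real (l choose y) * R_lx P l y"]
    by (simp add: R_lx_def)
  moreover have "l choose x > 0"
    using assms(3) by simp
  ultimately show ?thesis
    by (simp add: R_lx_def)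
qed

lemma E_f_lx_eq_0_if_sum_R_lx_eq_0:
  assumes "finite_bias_dist P" "(\<Sum>y = 1..l - 1. real (l choose y) * R_lx P l y) = 0"
    and "0 < x" "x < l"
  shows "E P (f_lx l x) = 0"
proof -
  have "E P (f_lx l (l - x)) \<le> 0"
    using E_f_lx_nonpos_if_sum_R_lx_eq_0[OF assms(2)] assms(3,4) by simp
  then have "- E P (f_lx l x) \<le> 0"
    using E_f_lx_reflect[OF assms(1)] assms(4) by simp
  then show ?thesis
    using E_f_lx_nonpos_if_sum_R_lx_eq_0[OF assms(2-4)] by simp
qed

lemma R_cal_eq_if_sum_R_lx_eq_0:
  assumes "finite_bias_dist P" "1 \<le> l" "(\<Sum>y = 1..l - 1. real (l choose y) * R_lx P l y) = 0"
  shows "R_cal l P = E P (\<lambda>p. sqrt (p * (1 - p)))"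
proof -
  obtain n where l: "l = Suc n"
    using assms(2) by (cases l) auto
  have fin: "finite (set_pmf P)" and supp: "set_pmf P \<subseteq> {0<..<1}"
    using assms(1) by (auto simp: finite_bias_dist_def)
  have "{..n} = insert 0 {1..n}"
    by auto
  then have "E P (f_lx l 0) = (\<Sum>x\<le>n. real (n choose x) * E P (f_lx l x))"
    using E_f_lx_eq_0_if_sum_R_lx_eq_0[OF assms(1,3)] l by simp
  also have "\<dots> = E P (\<lambda>p. \<Sum>x\<le>n. real (n choose x) * f_lx l x p)"
    by (rule E_sum_cmult[OF fin, symmetric])
  also have "\<dots> = E P (\<lambda>p. - sqrt (p * (1 - p)))"
    using supp by (intro E_cong[OF fin]) (auto simp: l binomial_sum_f_lx)
  finally show ?thesis
    unfolding R_cal_def assms(3) by (simp add: E_uminus)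
qed

theorem proposition3:
  fixes c :: nat and P :: "real pmf"
  assumes "c \<ge> 1" and "finite_bias_dist P" and "indisting c P"
  shows "\<forall>l. 1 \<le> l \<and> l \<le> c \<longrightarrow>
           R_cal l P = E P (\<lambda>p. sqrt (p * (1 - p))) \<and> E P (\<lambda>p. sqrt (p * (1 - p))) > 0"
proof (intro allI impI conjI)
  fix l assume l: "1 \<le> l \<and> l \<le> c"
  have "(\<Sum>x = 1..l - 1. real (l choose x) * R_lx P l x) = 0"
  proof (cases "l = 1")
    case False
    then show ?thesis
      using assms(3) l by (simp add: indisting_def)
  qed simp
  then show "R_cal l P = E P (\<lambda>p. sqrt (p * (1 - p)))"
    using R_cal_eq_if_sum_R_lx_eq_0[OF assms(2)] l by simp
  show "E P (\<lambda>p. sqrt (p * (1 - p))) > 0"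
    using assms(2) by (intro E_pos) (auto simp: finite_bias_dist_def)
qed

end
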